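(* Let $0<p,q\le\infty$ and let $g$ be an entire function such that the Volterra-type integral operator $V_g:\mathcal{F}_p\to\mathcal{F}_q$ is compact. Then $V_g$ and $V_{g(0)}$ (the Volterra-type integral operator induced by the constant function $g(0)$) belong to the same path connected component of the space $\mathbf{V}(\mathcal{F}_p,\mathcal{F}_q)$.
   Context: For $0<p<\infty$, the Fock space $\mathcal{F}_p$ consists of entire functions $f$ on $\mathbb{C}$ with $\|f\|_p^p=\frac{p}{2\pi}\int_{\mathbb{C}}|f(z)|^pe^{-\frac p2|z|^2}\,dA(z)<\infty$, where $dA$ is Lebesgue area measure; $\mathcal{F}_\infty$ consists of entire $f$ with $\|f\|_\infty=\sup_{z\in\mathbb{C}}|f(z)|e^{-\frac12|z|^2}<\infty$. For an entire function $g$, the Volterra-type integral operator is $V_gf(z)=\int_0^z f(w)g'(w)\,dw$. $\mathbf{V}(\mathcal{F}_p,\mathcal{F}_q)$ denotes the set of all bounded operators $V_g:\mathcal{F}_p\to\mathcal{F}_q$ ($g$ entire), equipped with the operator norm topology. *)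

theory Defs
  imports "HOL-Complex_Analysis.Complex_Analysis"
begin

text \<open>Exponents p in (0, infinity] are modelled as ennreal values; p = top means p = infinity.\<close>

definition fock_integral :: "real \<Rightarrow> (complex \<Rightarrow> complex) \<Rightarrow> ennreal" where
  "fock_integral r f =
     (\<integral>\<^sup>+ z. ennreal (norm (f z) powr r * exp (- (r / 2) * (norm z)\<^sup>2)) \<partial>lborel)"

definition fock_norm :: "ennreal \<Rightarrow> (complex \<Rightarrow> complex) \<Rightarrow> ennreal" where
  "fock_norm p f =
     (if p = top then (SUP z. ennreal (norm (f z) * exp (- (norm z)\<^sup>2 / 2)))
      else (let r = enn2real p; I = fock_integral r f in
            if I = top then top
            else ennreal ((r / (2 * pi) * enn2real I) powr (1 / r))))"

definition fock :: "ennreal \<Rightarrow> (complex \<Rightarrow> complex) \<Rightarrow> bool" where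
  "fock p f \<longleftrightarrow> f holomorphic_on UNIV \<and> fock_norm p f < top"

definition volterra :: "(complex \<Rightarrow> complex) \<Rightarrow> (complex \<Rightarrow> complex) \<Rightarrow> (complex \<Rightarrow> complex)" where
  "volterra g f = (\<lambda>z. contour_integral (linepath 0 z) (\<lambda>w. f w * deriv g w))"

definition fock_opnorm :: "ennreal \<Rightarrow> ennreal \<Rightarrow> ((complex \<Rightarrow> complex) \<Rightarrow> (complex \<Rightarrow> complex)) \<Rightarrow> ennreal" where
  "fock_opnorm p q T = (SUP f \<in> {f. fock p f \<and> fock_norm p f \<le> 1}. fock_norm q (T f))"

definition fock_bounded_op :: "ennreal \<Rightarrow> ennreal \<Rightarrow> ((complex \<Rightarrow> complex) \<Rightarrow> (complex \<Rightarrow> complex)) \<Rightarrow> bool" where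
  "fock_bounded_op p q T \<longleftrightarrow> (\<forall>f. fock p f \<longrightarrow> fock q (T f)) \<and> fock_opnorm p q T < top"

definition fock_compact_op :: "ennreal \<Rightarrow> ennreal \<Rightarrow> ((complex \<Rightarrow> complex) \<Rightarrow> (complex \<Rightarrow> complex)) \<Rightarrow> bool" where
  "fock_compact_op p q T \<longleftrightarrow> (\<forall>f. fock p f \<longrightarrow> fock q (T f)) \<and>
     (\<forall>fs :: nat \<Rightarrow> complex \<Rightarrow> complex. (\<forall>n. fock p (fs n) \<and> fock_norm p (fs n) \<le> 1) \<longrightarrow>
        (\<exists>r h. strict_mono r \<and> fock q h \<and>
           ((\<lambda>n. fock_norm q (\<lambda>z. T (fs (r n)) z - h z)) \<longlongrightarrow> 0) sequentially))"

definition Vspace :: "ennreal \<Rightarrow> ennreal \<Rightarrow> ((complex \<Rightarrow> complex) \<Rightarrow> (complex \<Rightarrow> complex)) set" where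
  "Vspace p q = {T. \<exists>h. h holomorphic_on UNIV \<and> T = volterra h \<and> fock_bounded_op p q T}"

definition same_path_component_V :: "ennreal \<Rightarrow> ennreal \<Rightarrow> ((complex \<Rightarrow> complex) \<Rightarrow> (complex \<Rightarrow> complex))
     \<Rightarrow> ((complex \<Rightarrow> complex) \<Rightarrow> (complex \<Rightarrow> complex)) \<Rightarrow> bool" where
  "same_path_component_V p q S T \<longleftrightarrow>
     (\<exists>\<gamma> :: real \<Rightarrow> (complex \<Rightarrow> complex) \<Rightarrow> (complex \<Rightarrow> complex).
        (\<forall>t\<in>{0..1}. \<gamma> t \<in> Vspace p q) \<and> \<gamma> 0 = S \<and> \<gamma> 1 = T \<and>
        (\<forall>t\<in>{0..1}. ((\<lambda>s. fock_opnorm p q (\<lambda>f z. \<gamma> s f z - \<gamma> t f z)) \<longlongrightarrow> 0)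
                        (at t within {0..1})))"

end

theory Submission
  imports Defs
begin

text \<open>The set \<open>V(F\<^sub>p, F\<^sub>q)\<close> is closed under scalar multiples, since \<open>V\<^bsub>c g\<^esub> = c V\<^bsub>g\<^esub>\<close>
  and the operator norm is absolutely homogeneous. Hence any bounded \<open>V\<^sub>g\<close> is joined to
  \<open>V\<^bsub>g(0)\<^esub> = 0\<close> by the segment \<open>t \<mapsto> V\<^bsub>(1-t) g\<^esub>\<close>, whose operator norm distance is
  \<open>|s - t| \<parallel>V\<^sub>g\<parallel>\<close>. Compactness enters only through boundedness: an unbounded image of
  the unit ball cannot have a convergent subsequence, because the Fock quasi-norm
  satisfies a quasi-triangle inequality.\<close>

lemma fock_imp_borel_measurable: "fock q F \<Longrightarrow> F \<in> borel_measurable borel"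
  unfolding fock_def
  by (intro borel_measurable_continuous_onI holomorphic_on_imp_continuous_on) auto

lemma fock_integral_cmult:
  assumes "r > 0" and "F \<in> borel_measurable borel"
  shows "fock_integral r (\<lambda>z. c * F z) = ennreal (norm c powr r) * fock_integral r F"
proof -
  have "fock_integral r (\<lambda>z. c * F z) =
     (\<integral>\<^sup>+ z. ennreal (norm c powr r) * ennreal (norm (F z) powr r * exp (- (r / 2) * (norm z)\<^sup>2)) \<partial>lborel)"
    unfolding fock_integral_def
    by (intro nn_integral_cong) (simp add: norm_mult powr_mult ennreal_mult' mult.assoc)
  also have "\<dots> = ennreal (norm c powr r) * fock_integral r F"
    unfolding fock_integral_def by (rule nn_integral_cmult) (use assms(2) in measurable)
  finally show ?thesis .
qed

lemma fock_norm_cmult: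
  assumes q: "q > 0" and F: "F \<in> borel_measurable borel"
  shows "fock_norm q (\<lambda>z. c * F z) = ennreal (norm c) * fock_norm q F"
proof (cases "q = top")
  case True
  then show ?thesis unfolding fock_norm_def
    by (simp add: SUP_mult_left_ennreal norm_mult ennreal_mult' mult.assoc)
next
  case finite: False
  define r where "r = enn2real q"
  have r: "r > 0" using q finite unfolding r_def
    by (simp add: enn2real_positive_iff top.not_eq_extremum)
  define I where "I = fock_integral r F"
  have cI: "fock_integral r (\<lambda>z. c * F z) = ennreal (norm c powr r) * I"
    using fock_integral_cmult[OF r F] I_def by simp
  consider "c = 0" | "c \<noteq> 0" "I = top" | "I \<noteq> top" by blast
  then show ?thesis
  proof cases
    case 1
    then show ?thesis using finite cI unfolding fock_norm_def r_def[symmetric] by (simp add: Let_def)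
  next
    case 2
    then show ?thesis using finite cI unfolding fock_norm_def r_def[symmetric] I_def
      by (simp add: Let_def ennreal_mult_top)
  next
    case 3
    have "(r / (2 * pi) * (norm c powr r * enn2real I)) powr (1 / r)
        = (norm c powr r) powr (1 / r) * (r / (2 * pi) * enn2real I) powr (1 / r)"
      using r by (simp add: powr_mult[symmetric] mult_ac)
    also have "(norm c powr r) powr (1 / r) = norm c"
      using r by (simp add: powr_powr)
    finally show ?thesis using finite cI 3 unfolding fock_norm_def r_def[symmetric] I_def
      by (simp add: Let_def ennreal_mult ennreal_mult_eq_top_iff enn2real_mult)
  qed
qed

lemma fock_cmult:
  assumes "q > 0" and "fock q F"
  shows "fock q (\<lambda>z. c * F z)"
proof -
  have "fock_norm q (\<lambda>z. c * F z) = ennreal (norm c) * fock_norm q F"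
    using assms by (simp add: fock_norm_cmult fock_imp_borel_measurable)
  also have "\<dots> < top" using assms(2) unfolding fock_def by (simp add: ennreal_mult_less_top)
  finally show ?thesis using assms(2) unfolding fock_def by (auto intro: holomorphic_intros)
qed

lemma fock_opnorm_cmult:
  assumes "q > 0" and "\<And>f. fock p f \<Longrightarrow> fock q (T f)"
  shows "fock_opnorm p q (\<lambda>f z. c * T f z) = ennreal (norm c) * fock_opnorm p q T"
  unfolding fock_opnorm_def SUP_mult_left_ennreal
  using assms by (intro SUP_cong refl fock_norm_cmult fock_imp_borel_measurable) auto

lemma norm_add_powr_le:
  fixes a b :: "'a::real_normed_vector"
  assumes "r > 0"
  shows "norm (a + b) powr r \<le> 2 powr r * (norm a powr r + norm b powr r)"
proof -
  have "norm (a + b) \<le> 2 * max (norm a) (norm b)"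
    using norm_triangle_ineq[of a b] by linarith
  hence "norm (a + b) powr r \<le> (2 * max (norm a) (norm b)) powr r"
    using assms by (intro powr_mono2) auto
  also have "\<dots> = 2 powr r * max (norm a) (norm b) powr r"
    by (simp add: powr_mult)
  also have "max (norm a) (norm b) powr r \<le> norm a powr r + norm b powr r"
    by (cases "norm a \<le> norm b") (auto simp: max_def)
  finally show ?thesis by (simp add: mult_left_mono)
qed

lemma fock_integral_add_le:
  assumes r: "r > 0" and A: "A \<in> borel_measurable borel" and h: "h \<in> borel_measurable borel"
  shows "fock_integral r (\<lambda>z. A z + h z) \<le> ennreal (2 powr r) * (fock_integral r A + fock_integral r h)"
proof -
  define w where "w F z = ennreal (norm (F z) powr r * exp (- (r / 2) * (norm z)\<^sup>2))"
    for F :: "complex \<Rightarrow> complex" and z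
  have wA: "w A \<in> borel_measurable lborel" and wh: "w h \<in> borel_measurable lborel"
    unfolding w_def using A h by measurable
  have "w (\<lambda>z. A z + h z) z \<le> ennreal (2 powr r) * (w A z + w h z)" for z
  proof -
    define e where "e = exp (- (r / 2) * (norm z)\<^sup>2)"
    have e: "e \<ge> 0" unfolding e_def by simp
    have "norm (A z + h z) powr r * e \<le> 2 powr r * (norm (A z) powr r * e + norm (h z) powr r * e)"
      using mult_right_mono[OF norm_add_powr_le[where a = "A z" and b = "h z", OF r] e]
      by (simp add: algebra_simps)
    then have "ennreal (norm (A z + h z) powr r * e) \<le>
        ennreal (2 powr r * (norm (A z) powr r * e + norm (h z) powr r * e))"
      by (rule ennreal_leI)
    then show ?thesis unfolding w_def e_def[symmetric] using e
      by (simp add: ennreal_mult ennreal_plus)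
  qed
  then have "fock_integral r (\<lambda>z. A z + h z) \<le> (\<integral>\<^sup>+ z. ennreal (2 powr r) * (w A z + w h z) \<partial>lborel)"
    unfolding fock_integral_def w_def by (intro nn_integral_mono) simp
  also have "\<dots> = ennreal (2 powr r) * (fock_integral r A + fock_integral r h)"
    using wA wh unfolding fock_integral_def w_def[symmetric]
    by (simp add: nn_integral_cmult nn_integral_add)
  finally show ?thesis .
qed

lemma fock_norm_top_add_le:
  "fock_norm top (\<lambda>z. A z + h z) \<le> fock_norm top A + fock_norm top h"
proof -
  have "ennreal (norm (A z + h z) * exp (- (norm z)\<^sup>2 / 2)) \<le> fock_norm top A + fock_norm top h" for z
  proof -
    have "ennreal (norm (A z + h z) * exp (- (norm z)\<^sup>2 / 2)) \<le>
          ennreal (norm (A z) * exp (- (norm z)\<^sup>2 / 2)) + ennreal (norm (h z) * exp (- (norm z)\<^sup>2 / 2))"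
      using norm_triangle_ineq[of "A z" "h z"]
      by (simp add: ennreal_plus[symmetric] del: ennreal_plus add: distrib_right[symmetric])
    also have "\<dots> \<le> fock_norm top A + fock_norm top h"
      by (auto simp: fock_norm_def intro!: add_mono SUP_upper)
    finally show ?thesis .
  qed
  then show ?thesis by (subst fock_norm_def) (simp add: SUP_least)
qed

lemma fock_integral_le_if_fock_norm_le_1:
  assumes "0 < q" "q \<noteq> top" and "fock_norm q A \<le> 1"
  shows "fock_integral (enn2real q) A \<le> ennreal (2 * pi / enn2real q)"
proof -
  define r where "r = enn2real q"
  have r: "r > 0" using assms unfolding r_def
    by (simp add: enn2real_positive_iff top.not_eq_extremum)
  have I: "fock_integral r A \<noteq> top"
    using assms unfolding fock_norm_def r_def[symmetric] by (auto simp: Let_def top_unique)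
  define E where "E = enn2real (fock_integral r A)"
  have "(r / (2 * pi) * E) powr (1 / r) \<le> 1"
    using assms I unfolding fock_norm_def r_def[symmetric] E_def by (simp add: Let_def ennreal_le_1)
  hence "((r / (2 * pi) * E) powr (1 / r)) powr r \<le> 1 powr r"
    using r by (intro powr_mono2) auto
  hence "r / (2 * pi) * E \<le> 1"
    using r by (simp add: powr_powr E_def)
  hence "E \<le> 2 * pi / r" using r by (simp add: field_simps)
  then show ?thesis
    using I unfolding E_def r_def[symmetric] by (metis ennreal_enn2real_if ennreal_leI)
qed

lemma fock_norm_le_if_fock_integral_le:
  assumes "0 < q" "q \<noteq> top" and "0 \<le> k" and "fock_integral (enn2real q) A \<le> ennreal k"
  shows "fock_norm q A \<le> ennreal ((enn2real q / (2 * pi) * k) powr (1 / enn2real q))"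
proof -
  define r where "r = enn2real q"
  have r: "r > 0" using assms unfolding r_def
    by (simp add: enn2real_positive_iff top.not_eq_extremum)
  have I: "fock_integral r A \<noteq> top" using assms(4) unfolding r_def by (auto simp: top_unique)
  have "enn2real (fock_integral r A) \<le> k"
    using assms(3,4) unfolding r_def by (simp add: enn2real_leI)
  hence "(r / (2 * pi) * enn2real (fock_integral r A)) powr (1 / r) \<le> (r / (2 * pi) * k) powr (1 / r)"
    using r by (intro powr_mono2 mult_left_mono) auto
  then show ?thesis
    using assms(2) I unfolding fock_norm_def r_def[symmetric] by (simp add: Let_def)
qed

lemma fock_norm_translate_unit_ball_bounded:
  assumes q: "q > 0" and h: "fock q h"
  obtains M :: real where
    "\<And>A. A \<in> borel_measurable borel \<Longrightarrow> fock_norm q A \<le> 1 \<Longrightarrow> fock_norm q (\<lambda>z. A z + h z) \<le> ennreal M"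
proof (cases "q = top")
  case True
  obtain m where m: "fock_norm q h = ennreal m" "m \<ge> 0"
    using h unfolding fock_def by (cases "fock_norm q h") auto
  have "fock_norm q (\<lambda>z. A z + h z) \<le> ennreal (1 + m)" if "fock_norm q A \<le> 1" for A
  proof -
    have "fock_norm q (\<lambda>z. A z + h z) \<le> fock_norm q A + fock_norm q h"
      using True fock_norm_top_add_le by simp
    also have "\<dots> \<le> 1 + ennreal m" using that m by (intro add_mono) auto
    finally show ?thesis using m by (simp add: ennreal_plus)
  qed
  then show ?thesis using that by blast
next
  case finite: False
  define r where "r = enn2real q"
  have r: "r > 0" using q finite unfolding r_def
    by (simp add: enn2real_positive_iff top.not_eq_extremum)
  have hI: "fock_integral r h \<noteq> top"
    using h finite unfolding fock_def fock_norm_def r_def[symmetric] by (auto simp: Let_def split: if_splits)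
  define k where "k = enn2real (ennreal (2 powr r) * (ennreal (2 * pi / r) + fock_integral r h))"
  have k0: "0 \<le> k" unfolding k_def by simp
  have k: "ennreal (2 powr r) * (ennreal (2 * pi / r) + fock_integral r h) = ennreal k"
    unfolding k_def using hI by (simp add: ennreal_mult_eq_top_iff ennreal_enn2real_if)
  have "fock_norm q (\<lambda>z. A z + h z) \<le> ennreal ((r / (2 * pi) * k) powr (1 / r))"
    if A: "A \<in> borel_measurable borel" "fock_norm q A \<le> 1" for A
  proof -
    have "fock_integral r (\<lambda>z. A z + h z) \<le> ennreal (2 powr r) * (fock_integral r A + fock_integral r h)"
      using fock_integral_add_le[OF r A(1) fock_imp_borel_measurable[OF h]] .
    also have "\<dots> \<le> ennreal k"
      unfolding k[symmetric] using fock_integral_le_if_fock_norm_le_1[OF q finite A(2)]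
      by (intro mult_left_mono add_mono) (auto simp: r_def)
    finally show ?thesis
      using fock_norm_le_if_fock_integral_le[OF q finite k0] unfolding r_def by blast
  qed
  then show ?thesis using that by blast
qed

lemma fock_compact_op_imp_bounded_op:
  assumes q: "q > 0" and C: "fock_compact_op p q T"
  shows "fock_bounded_op p q T"
  unfolding fock_bounded_op_def
proof (intro conjI)
  show "\<forall>f. fock p f \<longrightarrow> fock q (T f)" using C unfolding fock_compact_op_def by blast
  show "fock_opnorm p q T < top"
  proof (rule ccontr)
    assume "\<not> fock_opnorm p q T < top"
    then have "ennreal (real n) < fock_opnorm p q T" for n by (simp add: less_top[symmetric])
    then have "\<exists>f. (fock p f \<and> fock_norm p f \<le> 1) \<and> ennreal (real n) < fock_norm q (T f)" for n
      unfolding fock_opnorm_def less_SUP_iff by auto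
    then obtain fs where fs: "\<And>n. fock p (fs n) \<and> fock_norm p (fs n) \<le> 1"
       and large: "\<And>n. ennreal (real n) < fock_norm q (T (fs n))"
      by metis
    obtain r h where r: "strict_mono r" and h: "fock q h"
      and lim: "((\<lambda>n. fock_norm q (\<lambda>z. T (fs (r n)) z - h z)) \<longlongrightarrow> 0) sequentially"
      using C fs unfolding fock_compact_op_def by blast
    obtain M where M: "\<And>A. A \<in> borel_measurable borel \<Longrightarrow> fock_norm q A \<le> 1 \<Longrightarrow>
             fock_norm q (\<lambda>z. A z + h z) \<le> ennreal M"
      using fock_norm_translate_unit_ball_bounded[OF q h] by blast
    have "eventually (\<lambda>n. fock_norm q (\<lambda>z. T (fs (r n)) z - h z) < 1 \<and> n \<ge> nat \<lceil>M\<rceil>) sequentially"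
      by (intro eventually_conj order_tendstoD(2)[OF lim] eventually_ge_at_top) simp
    then obtain n where n: "fock_norm q (\<lambda>z. T (fs (r n)) z - h z) < 1" "n \<ge> nat \<lceil>M\<rceil>"
      by (auto simp: eventually_sequentially)
    have "fock q (T (fs (r n)))" using C fs unfolding fock_compact_op_def by blast
    then have "(\<lambda>z. T (fs (r n)) z - h z) \<in> borel_measurable borel"
      using fock_imp_borel_measurable[OF h] by (intro borel_measurable_diff) (rule fock_imp_borel_measurable)
    then have "fock_norm q (T (fs (r n))) \<le> ennreal M"
      using M[of "\<lambda>z. T (fs (r n)) z - h z"] n(1) by simp
    with large[of "r n"] have "ennreal (real (r n)) < ennreal M" by (rule order.strict_trans2)
    then have "real (r n) < M" by (simp add: ennreal_less_iff)
    moreover have "r n \<ge> n" using seq_suble[OF r] by simp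
    ultimately show False using n(2) by linarith
  qed
qed

lemma volterra_cmult:
  assumes "g holomorphic_on UNIV"
  shows "volterra (\<lambda>z. c * g z) = (\<lambda>f z. c * volterra g f z)"
proof (intro ext)
  fix f z
  have "deriv (\<lambda>z. c * g z) w = c * deriv g w" for w
    using assms by (intro deriv_cmult holomorphic_on_imp_differentiable_at) auto
  then show "volterra (\<lambda>z. c * g z) f z = c * volterra g f z"
    unfolding volterra_def contour_integral_integral by (simp add: mult.left_commute)
qed

lemma volterra_cmult_in_Vspace:
  assumes q: "q > 0" and g: "g holomorphic_on UNIV" and B: "fock_bounded_op p q (volterra g)"
  shows "volterra (\<lambda>z. c * g z) \<in> Vspace p q"
proof -
  have V: "\<And>f. fock p f \<Longrightarrow> fock q (volterra g f)" using B unfolding fock_bounded_op_def by blast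
  have "fock_bounded_op p q (\<lambda>f z. c * volterra g f z)"
    using B unfolding fock_bounded_op_def
    by (simp add: fock_cmult[OF q] fock_opnorm_cmult[OF q V] ennreal_mult_less_top)
  then show ?thesis
    unfolding Vspace_def using g
    by (intro CollectI exI[of _ "\<lambda>z. c * g z"]) (auto intro: holomorphic_intros simp: volterra_cmult)
qed

lemma bounded_volterra_same_path_component_constant:
  assumes q: "q > 0" and g: "g holomorphic_on UNIV" and B: "fock_bounded_op p q (volterra g)"
  shows "same_path_component_V p q (volterra g) (volterra (\<lambda>_. g 0))"
proof -
  have V: "\<And>f. fock p f \<Longrightarrow> fock q (volterra g f)" using B unfolding fock_bounded_op_def by blast
  obtain b where b: "fock_opnorm p q (volterra g) = ennreal b" "0 \<le> b"
    using B unfolding fock_bounded_op_def by (cases "fock_opnorm p q (volterra g)") auto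
  define \<gamma> where "\<gamma> t = volterra (\<lambda>z. complex_of_real (1 - t) * g z)" for t :: real
  have \<gamma>: "\<gamma> t = (\<lambda>f z. complex_of_real (1 - t) * volterra g f z)" for t
    unfolding \<gamma>_def volterra_cmult[OF g] ..
  have dist: "fock_opnorm p q (\<lambda>f z. \<gamma> s f z - \<gamma> t f z) = ennreal (\<bar>t - s\<bar> * b)" for s t
  proof -
    have "(\<lambda>f z. \<gamma> s f z - \<gamma> t f z) = (\<lambda>f z. complex_of_real (t - s) * volterra g f z)"
      unfolding \<gamma> by (intro ext) (simp add: algebra_simps)
    then show ?thesis
      using fock_opnorm_cmult[OF q V, where c = "complex_of_real (t - s)"] b
      by (simp del: of_real_diff add: ennreal_mult)
  qed
  show ?thesis
    unfolding same_path_component_V_def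
  proof (intro exI[of _ \<gamma>] conjI ballI)
    show "\<gamma> t \<in> Vspace p q" for t
      unfolding \<gamma>_def by (rule volterra_cmult_in_Vspace[OF q g B])
    show "\<gamma> 0 = volterra g" by (simp add: \<gamma>_def)
    show "\<gamma> 1 = volterra (\<lambda>_. g 0)" unfolding \<gamma>_def volterra_def by (intro ext) simp
    have "((\<lambda>s. ennreal (\<bar>t - s\<bar> * b)) \<longlongrightarrow> ennreal (\<bar>t - t\<bar> * b)) (at t within {0..1})" for t
      by (intro tendsto_intros)
    then show "((\<lambda>s. fock_opnorm p q (\<lambda>f z. \<gamma> s f z - \<gamma> t f z)) \<longlongrightarrow> 0) (at t within {0..1})" for t
      unfolding dist by simp
  qed
qed

theorem theorem2p1:
  fixes p q :: ennreal and g :: "complex \<Rightarrow> complex"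
  assumes "0 < p" and "0 < q"
    and "g holomorphic_on UNIV"
    and "fock_compact_op p q (volterra g)"
  shows "same_path_component_V p q (volterra g) (volterra (\<lambda>_. g 0))"
  by (rule bounded_volterra_same_path_component_constant
      [OF assms(2,3) fock_compact_op_imp_bounded_op[OF assms(2,4)]])

end
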